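(* Let $f,g:\mathbb{N}\to\mathbb{N}$ be functions with $n=o(f(n))$ and $g(n)=o(n^{2})$ as $n\to\infty$, and let $l:\mathbb{N}\to\mathbb{N}$ satisfy $f(n)\le l(n)\le g(n)$ for every $n\in\mathbb{N}$. Then $$r(l(n))\sim \frac{l(n)^{2}}{2\alpha_n}\qquad (n\to\infty).$$
   Context: For $n\in\mathbb{N}$ let $G_n=G(n,3,1)$ be the graph whose vertex set $V_n$ consists of all $3$-element subsets of $\{1,\dots,n\}$ (equivalently, $(0,1)$-vectors in $\mathbb{R}^n$ with exactly three ones), two vertices being adjacent if and only if the corresponding sets share exactly one element (equivalently, the vectors have scalar product $1$). Let $\alpha_n$ denote the independence number of $G(n,3,1)$. For $W\subseteq V_n$ let $r(W)$ be the number of edges of $G(n,3,1)$ with both endpoints in $W$, and for an integer $0\le l\le \binom{n}{3}$ let $r(l)=\min\{r(W): W\subseteq V_n,\ |W|=l\}$ (so $r(l(n))$ is computed in $G(n,3,1)$). *)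

theory Defs
  imports Main "HOL-Library.Landau_Symbols"
begin

definition V :: "nat \<Rightarrow> nat set set" where
  "V n = {A. A \<subseteq> {1..n} \<and> card A = 3}"

definition adj :: "nat set \<Rightarrow> nat set \<Rightarrow> bool" where
  "adj A B \<longleftrightarrow> card (A \<inter> B) = 1"

definition alpha :: "nat \<Rightarrow> nat" where
  "alpha n = Max {card W | W. W \<subseteq> V n \<and> (\<forall>A\<in>W. \<forall>B\<in>W. \<not> adj A B)}"

definition redges :: "nat set set \<Rightarrow> nat" where
  "redges W = card {{A, B} | A B. A \<in> W \<and> B \<in> W \<and> adj A B}"

definition rmin :: "nat \<Rightarrow> nat \<Rightarrow> nat" where
  "rmin n l = Min {redges W | W. W \<subseteq> V n \<and> card W = l}"

end

theory Submission
  imports Defs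
begin

text \<open>
  Lower bound: by the Caro--Wei inequality and the AM--HM inequality, every set W of l vertices
  contains an independent set I with \<open>l\<^sup>2 \<le> |I| (2 r(W) + l)\<close>, so
  \<open>2 \<alpha>\<^sub>n r(l) / l\<^sup>2 \<ge> 1 - \<alpha>\<^sub>n / l\<close>. Moreover \<open>\<alpha>\<^sub>n \<le> n\<close>: a family of 3-sets no two of which meet
  in exactly one point has at most as many members as points, because the members meeting a fixed
  member A form a block that is disjoint from all other members and is no larger than its union.

  Upper bound: write \<open>n = 2m + k\<close> and place the triples \<open>{2t+1, 2t+2, 2m+1+j}\<close> (t < m, j < k)
  in an m \<times> k grid. Two of them meet in exactly one point iff they lie in the same column, so the
  first l of them in row-major order span at most \<open>l\<^sup>2/(2k)\<close> edges, and
  \<open>2 \<alpha>\<^sub>n r(l) / l\<^sup>2 \<le> \<alpha>\<^sub>n / k \<le> n / k\<close>.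

  Since \<open>n = o(l)\<close> and \<open>l = o(n\<^sup>2)\<close>, one can take \<open>m \<approx> 2l/n = o(n)\<close>, and both bounds tend to 1.
\<close>

section \<open>Independent sets in graphs\<close>

definition edges :: "('a \<Rightarrow> 'a \<Rightarrow> bool) \<Rightarrow> 'a set \<Rightarrow> 'a set set" where
  "edges E W = {{a, b} | a b. a \<in> W \<and> b \<in> W \<and> E a b}"

definition degree :: "('a \<Rightarrow> 'a \<Rightarrow> bool) \<Rightarrow> 'a set \<Rightarrow> 'a \<Rightarrow> nat" where
  "degree E W v = card {u \<in> W. E v u}"

lemma finite_edges: "finite W \<Longrightarrow> finite (edges E W)"
  unfolding edges_def by (rule finite_subset[of _ "(\<lambda>(a, b). {a, b}) ` (W \<times> W)"]) auto

lemma sum_degree_le_twice_card_edges: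
  assumes "finite W"
  shows "(\<Sum>v\<in>W. degree E W v) \<le> 2 * card (edges E W)"
proof -
  define D where "D = (SIGMA v:W. {u \<in> W. E v u})"
  have "(\<Sum>v\<in>W. degree E W v) = card D"
    unfolding D_def degree_def using assms by (subst card_SigmaI) auto
  also have "D = (\<Union>e\<in>edges E W. {p \<in> D. {fst p, snd p} = e})"
    unfolding D_def edges_def by fastforce
  also have "card \<dots> \<le> (\<Sum>e\<in>edges E W. card {p \<in> D. {fst p, snd p} = e})"
    by (rule card_UN_le[OF finite_edges[OF assms]])
  also have "\<dots> \<le> (\<Sum>e\<in>edges E W. 2)"
  proof (rule sum_mono)
    fix e assume "e \<in> edges E W"
    then obtain a b where e: "e = {a, b}" unfolding edges_def by blast
    have "card {p \<in> D. {fst p, snd p} = e} \<le> card {(a, b), (b, a)}"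
      by (rule card_mono) (auto simp: e doubleton_eq_iff)
    also have "\<dots> \<le> 2" by (rule card_insert_le_m1) simp_all
    finally show "card {p \<in> D. {fst p, snd p} = e} \<le> 2" .
  qed
  finally show ?thesis by simp
qed

lemma sum_inverse_degree_le_remove_closed_nbhd:
  assumes "finite W" "v \<in> W" and v_min: "\<And>u. u \<in> W \<Longrightarrow> degree E W v \<le> degree E W u"
    and "\<not> E v v"
  defines "W' \<equiv> W - insert v {u \<in> W. E v u}"
  shows "(\<Sum>u\<in>W. 1 / (real (degree E W u) + 1)) \<le> 1 + (\<Sum>u\<in>W'. 1 / (real (degree E W' u) + 1))"
proof -
  define N where "N = insert v {u \<in> W. E v u}"
  have N_sub: "N \<subseteq> W" unfolding N_def using assms(2) by blast
  have card_N: "card N = degree E W v + 1"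
    unfolding N_def degree_def using assms(1,4) by simp
  have "(\<Sum>u\<in>N. 1 / (real (degree E W u) + 1)) \<le> (\<Sum>u\<in>N. 1 / (real (degree E W v) + 1))"
    using v_min N_sub by (intro sum_mono) (simp add: frac_le subset_iff)
  also have "\<dots> = 1" using card_N by simp
  finally have N_part: "(\<Sum>u\<in>N. 1 / (real (degree E W u) + 1)) \<le> 1" .
  have W'_part: "(\<Sum>u\<in>W'. 1 / (real (degree E W u) + 1)) \<le> (\<Sum>u\<in>W'. 1 / (real (degree E W' u) + 1))"
  proof (rule sum_mono)
    fix u
    have "degree E W' u \<le> degree E W u"
      unfolding degree_def W'_def using assms(1) by (intro card_mono) auto
    then show "1 / (real (degree E W u) + 1) \<le> 1 / (real (degree E W' u) + 1)"
      by (simp add: frac_le)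
  qed
  have "(\<Sum>u\<in>W. 1 / (real (degree E W u) + 1))
      = (\<Sum>u\<in>N. 1 / (real (degree E W u) + 1)) + (\<Sum>u\<in>W'. 1 / (real (degree E W u) + 1))"
    unfolding W'_def N_def[symmetric] using N_sub assms(1) by (metis add.commute sum.subset_diff)
  then show ?thesis using N_part W'_part by simp
qed

lemma caro_wei:
  assumes "finite W" and irrefl: "\<And>v. \<not> E v v" and sym: "\<And>a b. E a b \<Longrightarrow> E b a"
  obtains I where "I \<subseteq> W" "\<forall>a\<in>I. \<forall>b\<in>I. \<not> E a b"
    "(\<Sum>v\<in>W. 1 / (real (degree E W v) + 1)) \<le> real (card I)"
  using assms(1)
proof (induction "card W" arbitrary: W thesis rule: less_induct)
  case less
  show ?case
  proof (cases "W = {}")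
    case True
    then show ?thesis using less.prems(1)[of "{}"] by simp
  next
    case False
    obtain v where v: "v \<in> W" and v_min: "\<And>u. u \<in> W \<Longrightarrow> degree E W v \<le> degree E W u"
      using ex_is_arg_min_if_finite[OF \<open>finite W\<close> False, of "degree E W"]
      by (auto simp: is_arg_min_linorder)
    define W' where "W' = W - insert v {u \<in> W. E v u}"
    have "card W' < card W"
      unfolding W'_def using v \<open>finite W\<close> by (intro psubset_card_mono) auto
    then obtain I' where I': "I' \<subseteq> W'" "\<forall>a\<in>I'. \<forall>b\<in>I'. \<not> E a b"
      "(\<Sum>u\<in>W'. 1 / (real (degree E W' u) + 1)) \<le> real (card I')"
      using less.hyps \<open>finite W\<close> unfolding W'_def by blast
    have not_nb: "\<not> E v u" "v \<noteq> u" if "u \<in> I'" for u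
      using I'(1) that unfolding W'_def by blast+
    have "finite I'" using I'(1) \<open>finite W\<close> unfolding W'_def by (meson finite_Diff finite_subset)
    moreover have "v \<notin> I'" using not_nb(2) by blast
    ultimately have "card (insert v I') = card I' + 1" by simp
    moreover have "(\<Sum>u\<in>W. 1 / (real (degree E W u) + 1)) \<le> 1 + real (card I')"
      using sum_inverse_degree_le_remove_closed_nbhd[OF \<open>finite W\<close> v v_min irrefl] I'(3)
      unfolding W'_def by linarith
    ultimately have "(\<Sum>u\<in>W. 1 / (real (degree E W u) + 1)) \<le> real (card (insert v I'))"
      by simp
    moreover have "\<forall>a\<in>insert v I'. \<forall>b\<in>insert v I'. \<not> E a b"
      using I'(2) not_nb irrefl sym by blast
    moreover have "insert v I' \<subseteq> W" using I'(1) v unfolding W'_def by blast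
    ultimately show ?thesis by (intro less.prems(1))
  qed
qed

lemma card_sq_le_sum_mult_sum_inverse:
  fixes x :: "'a \<Rightarrow> real"
  assumes "finite W" and pos: "\<And>v. v \<in> W \<Longrightarrow> 0 < x v"
  shows "real (card W)^2 \<le> (\<Sum>v\<in>W. x v) * (\<Sum>v\<in>W. 1 / x v)"
proof (cases "W = {}")
  case True
  then show ?thesis by simp
next
  case False
  define S where "S = (\<Sum>v\<in>W. x v)"
  define a where "a = S / card W"
  have "0 < S" unfolding S_def using assms False by (intro sum_pos) auto
  moreover have "0 < card W" using assms(1) False by (simp add: card_gt_0_iff)
  ultimately have "0 < a" unfolding a_def by simp
  \<comment> \<open>\<open>1/x\<close> lies above its tangent line at the mean \<open>a\<close>\<close>
  have tangent: "(2 * a - x v) / a^2 \<le> 1 / x v" if "v \<in> W" for v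
  proof -
    have "x v * (2 * a - x v) \<le> a^2"
      using zero_le_power2[of "a - x v"] by (simp add: power2_eq_square algebra_simps)
    then show ?thesis using pos[OF that] \<open>0 < a\<close> by (simp add: field_simps)
  qed
  have "(\<Sum>v\<in>W. (2 * a - x v) / a^2) = (2 * a * card W - S) / a^2"
    unfolding S_def by (simp add: sum_divide_distrib[symmetric] sum_subtractf)
  also have "\<dots> = real (card W)^2 / S"
    using \<open>0 < S\<close> \<open>0 < card W\<close> unfolding a_def by (simp add: field_simps power2_eq_square)
  finally have "real (card W)^2 / S = (\<Sum>v\<in>W. (2 * a - x v) / a^2)" ..
  also have "\<dots> \<le> (\<Sum>v\<in>W. 1 / x v)" by (rule sum_mono) (rule tangent)
  finally show ?thesis using \<open>0 < S\<close> unfolding S_def by (simp add: field_simps)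
qed

lemma turan_bound:
  assumes "finite W" and "\<And>v. \<not> E v v" and "\<And>a b. E a b \<Longrightarrow> E b a"
  obtains I where "I \<subseteq> W" "\<forall>a\<in>I. \<forall>b\<in>I. \<not> E a b"
    "real (card W)^2 \<le> real (card I) * (2 * real (card (edges E W)) + real (card W))"
proof -
  let ?d = "\<lambda>v. real (degree E W v) + 1"
  obtain I where I: "I \<subseteq> W" "\<forall>a\<in>I. \<forall>b\<in>I. \<not> E a b" "(\<Sum>v\<in>W. 1 / ?d v) \<le> real (card I)"
    using caro_wei assms by blast
  have "(\<Sum>v\<in>W. ?d v) = real (\<Sum>v\<in>W. degree E W v) + real (card W)"
    by (simp add: sum.distrib)
  also have "\<dots> \<le> 2 * real (card (edges E W)) + real (card W)"
    using sum_degree_le_twice_card_edges[OF assms(1), of E] by linarith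
  finally have sum_d: "(\<Sum>v\<in>W. ?d v) \<le> 2 * real (card (edges E W)) + real (card W)" .
  have "real (card W)^2 \<le> (\<Sum>v\<in>W. ?d v) * (\<Sum>v\<in>W. 1 / ?d v)"
    by (rule card_sq_le_sum_mult_sum_inverse) (use assms(1) in auto)
  also have "\<dots> \<le> (2 * real (card (edges E W)) + real (card W)) * real (card I)"
    using sum_d I(3) by (intro mult_mono) (auto intro: sum_nonneg)
  finally show ?thesis using I(1,2) that by (simp add: mult.commute)
qed

section \<open>Families of 3-sets without intersections of size one\<close>

lemma two_subsets_of_triple_eq:
  assumes "P \<subseteq> A" "Q \<subseteq> A" "card A = 3" "card P = 2" "card Q = 2" "card (P \<inter> Q) \<noteq> 1"
  shows "P = Q"
proof -
  have "finite A" using assms(3) by (metis card.infinite zero_neq_numeral)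
  then have fin: "finite P" "finite Q" using assms(1,2) finite_subset by auto
  have "card (P \<union> Q) \<le> 3" using card_mono[OF \<open>finite A\<close>, of "P \<union> Q"] assms by simp
  moreover have "card (P \<union> Q) + card (P \<inter> Q) = 4" using card_Un_Int[OF fin] assms by simp
  moreover have "card (P \<inter> Q) \<le> card P" using fin by (intro card_mono) auto
  ultimately have "card (P \<inter> Q) = card P" "card (P \<inter> Q) = card Q" using assms(4-6) by auto
  then show ?thesis using card_subset_eq fin by (metis inf_le1 inf_le2)
qed

lemma triple_meets_triple:
  assumes "card A = 3" "card B = 3" "A \<noteq> B" "B \<inter> A \<noteq> {}" "card (B \<inter> A) \<noteq> 1"
  shows "card (B \<inter> A) = 2" and "card (B - A) = 1"
proof -
  have fin: "finite A" "finite B" using assms(1,2) by (metis card.infinite zero_neq_numeral)+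
  have "card (B \<inter> A) \<le> 3" using card_mono[OF fin(2), of "B \<inter> A"] assms(2) by simp
  moreover have "card (B \<inter> A) \<noteq> 3"
    using card_subset_eq[OF fin(1), of "B \<inter> A"] card_subset_eq[OF fin(2), of "B \<inter> A"] assms
    by auto
  moreover have "card (B \<inter> A) \<noteq> 0" using fin assms(4) by simp
  ultimately show "card (B \<inter> A) = 2" using assms(5) by linarith
  then show "card (B - A) = 1" using card_Diff_subset_Int[of B A] fin assms(2) by simp
qed

lemma same_trace_if_outer_points_differ:
  assumes "card A = 3" "card (B \<inter> A) = 2" "card (C \<inter> A) = 2"
    and "B - A = {b}" "C - A = {c}" "b \<noteq> c" "card (B \<inter> C) \<noteq> 1"
  shows "B \<inter> A = C \<inter> A"
proof -
  have "x \<in> A" if "x \<in> B" "x \<in> C" for x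
  proof (rule ccontr)
    assume "x \<notin> A"
    then have "x = b" "x = c" using that assms(4,5) by blast+
    then show False using assms(6) by simp
  qed
  then have "B \<inter> C = (B \<inter> A) \<inter> (C \<inter> A)" by blast
  then show ?thesis using assms(1-3,7) by (intro two_subsets_of_triple_eq[of _ A]) auto
qed

lemma card_le_card_Union_Diff_add_two:
  assumes "card A = 3" "finite P"
    and shape: "\<And>B. B \<in> P \<Longrightarrow> card (B \<inter> A) = 2 \<and> card (B - A) = 1"
    and P1: "\<forall>B\<in>P. \<forall>C\<in>P. card (B \<inter> C) \<noteq> 1"
  shows "card P \<le> card (\<Union>P - A) + 2"
proof -
  have "finite A" using assms(1) by (metis card.infinite zero_neq_numeral)
  define y where "y B = the_elem (B - A)" for B
  have y: "B - A = {y B}" if "B \<in> P" for B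
    using shape[OF that] unfolding y_def by (metis card_1_singletonE the_elem_eq)
  then have outer: "\<Union>P - A = y ` P" by auto
  show ?thesis
  proof (cases "inj_on y P")
    case True
    then show ?thesis unfolding outer by (simp add: card_image)
  next
    case False
    then obtain B C where BC: "B \<in> P" "C \<in> P" "B \<noteq> C" "y B = y C"
      unfolding inj_on_def by blast
    then have "B \<inter> A \<noteq> C \<inter> A" using y by (metis Un_Diff_Int sup_commute)
    \<comment> \<open>so all members of P share their point outside A and differ in their trace on A\<close>
    have y_const: "y D = y B" if "D \<in> P" for D
    proof (rule ccontr)
      assume "y D \<noteq> y B"
      have "card (D \<inter> B) \<noteq> 1" "card (D \<inter> C) \<noteq> 1" using P1 that BC(1,2) by blast+
      with \<open>y D \<noteq> y B\<close> have "D \<inter> A = B \<inter> A" "D \<inter> A = C \<inter> A"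
        using same_trace_if_outer_points_differ[OF assms(1) _ _ y[OF that] y[OF BC(1)]]
          same_trace_if_outer_points_differ[OF assms(1) _ _ y[OF that] y[OF BC(2)]]
        by (simp_all add: shape that BC)
      then show False using \<open>B \<inter> A \<noteq> C \<inter> A\<close> by simp
    qed
    have "inj_on (\<lambda>D. D \<inter> A) P"
      by (rule inj_onI) (metis y y_const Un_Diff_Int)
    moreover have "(\<lambda>D. D \<inter> A) ` P \<subseteq> {Q. Q \<subseteq> A \<and> card Q = 2}" using shape by auto
    moreover have "finite {Q. Q \<subseteq> A \<and> card Q = 2}"
      using \<open>finite A\<close> by (intro finite_subset[OF _ finite_Collect_subsets]) auto
    ultimately have "card P \<le> card {Q. Q \<subseteq> A \<and> card Q = 2}" by (rule card_inj_on_le)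
    also have "\<dots> = 3" using n_subsets[OF \<open>finite A\<close>, of 2] assms(1) by (simp add: choose_two)
    finally have "card P \<le> 3" .
    moreover have "0 < card (y ` P)" using BC(1) \<open>finite P\<close> by (auto simp: card_gt_0_iff)
    ultimately show ?thesis unfolding outer by linarith
  qed
qed

lemma card_star_le_card_Union:
  assumes F3: "\<forall>X\<in>F. card X = 3" and F1: "\<forall>X\<in>F. \<forall>Y\<in>F. card (X \<inter> Y) \<noteq> 1"
    and "finite F" and "A \<in> F"
  defines "N \<equiv> {B \<in> F. B \<inter> A \<noteq> {}}"
  shows "card N \<le> card (\<Union>N)"
proof -
  define P where "P = N - {A}"
  have card_A: "card A = 3" and "finite A"
    using F3 \<open>A \<in> F\<close> by (auto intro: card_ge_0_finite)
  have "A \<in> N" unfolding N_def using \<open>A \<in> F\<close> card_A by auto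
  have "finite N" unfolding N_def using \<open>finite F\<close> by simp
  have "finite (\<Union>N)"
    using F3 by (intro finite_Union \<open>finite N\<close>) (auto simp: N_def intro: card_ge_0_finite)
  have "card P \<le> card (\<Union>P - A) + 2"
  proof (rule card_le_card_Union_Diff_add_two[OF card_A])
    show "finite P" using \<open>finite N\<close> unfolding P_def by simp
    show "card (B \<inter> A) = 2 \<and> card (B - A) = 1" if "B \<in> P" for B
    proof -
      from that have "B \<in> F" "A \<noteq> B" "B \<inter> A \<noteq> {}" unfolding P_def N_def by auto
      then show ?thesis using triple_meets_triple[of A B] card_A F3 F1 \<open>A \<in> F\<close> by auto
    qed
    show "\<forall>B\<in>P. \<forall>C\<in>P. card (B \<inter> C) \<noteq> 1" using F1 unfolding P_def N_def by blast
  qed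
  moreover have "card N = card P + 1"
    unfolding P_def using card_Suc_Diff1[OF \<open>finite N\<close> \<open>A \<in> N\<close>] by simp
  moreover have "card (\<Union>N) = card (\<Union>P - A) + 3"
  proof -
    have "\<Union>N = (\<Union>P - A) \<union> A" unfolding P_def using \<open>A \<in> N\<close> by blast
    moreover have "finite (\<Union>P - A)"
      using \<open>finite (\<Union>N)\<close> by (rule finite_subset[rotated]) (auto simp: P_def)
    moreover have "(\<Union>P - A) \<inter> A = {}" by blast
    ultimately show ?thesis using card_A \<open>finite A\<close> card_Un_disjoint[of "\<Union>P - A" A] by simp
  qed
  ultimately show ?thesis by simp
qed

lemma triples_meet_trans:
  assumes F3: "\<forall>X\<in>F. card X = 3" and F1: "\<forall>X\<in>F. \<forall>Y\<in>F. card (X \<inter> Y) \<noteq> 1"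
    and "A \<in> F" "B \<in> F" "C \<in> F" "B \<inter> A \<noteq> {}" "C \<inter> B \<noteq> {}"
  shows "C \<inter> A \<noteq> {}"
proof
  assume "C \<inter> A = {}"
  then have "B \<noteq> A" using assms(7) by blast
  then have "card (B - A) = 1"
    using triple_meets_triple(2)[of A B] F3 F1 assms(3,4,6) by auto
  moreover have "C \<inter> B \<subseteq> B - A" using \<open>C \<inter> A = {}\<close> by blast
  ultimately have "card (C \<inter> B) = 1"
    using assms(7) by (metis card_1_singletonE subset_singletonD)
  then show False using F1 assms(4,5) by blast
qed

lemma card_le_card_Union_if_no_Int_one:
  assumes "finite F" "\<forall>X\<in>F. card X = 3" "\<forall>X\<in>F. \<forall>Y\<in>F. card (X \<inter> Y) \<noteq> 1"
  shows "card F \<le> card (\<Union>F)"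
  using assms
proof (induction "card F" arbitrary: F rule: less_induct)
  case less
  show ?case
  proof (cases "F = {}")
    case False
    then obtain A where "A \<in> F" by blast
    define N where "N = {B \<in> F. B \<inter> A \<noteq> {}}"
    have "finite X" if "X \<in> F" for X using less.prems(2) that by (auto intro: card_ge_0_finite)
    then have fin_Union: "finite (\<Union>G)" if "G \<subseteq> F" for G
      using that less.prems(1) by (meson finite_Union rev_finite_subset subsetD)
    have "N \<subseteq> F" "A \<in> N" unfolding N_def using \<open>A \<in> F\<close> less.prems(2) by auto
    then have "card (F - N) < card F"
      using less.prems(1) by (intro psubset_card_mono) auto
    then have IH: "card (F - N) \<le> card (\<Union>(F - N))"
      using less.hyps less.prems by (meson DiffD1 finite_Diff)
    have disjoint: "\<Union>N \<inter> \<Union>(F - N) = {}"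
      using triples_meet_trans[OF less.prems(2,3) \<open>A \<in> F\<close>] unfolding N_def by blast
    have "card F = card N + card (F - N)"
      using \<open>N \<subseteq> F\<close> less.prems(1) by (metis card_Diff_subset card_mono finite_subset le_add_diff_inverse)
    also have "\<dots> \<le> card (\<Union>N) + card (\<Union>(F - N))"
      using card_star_le_card_Union[OF less.prems(2,3,1) \<open>A \<in> F\<close>] IH unfolding N_def by linarith
    also have "\<dots> = card (\<Union>N \<union> \<Union>(F - N))"
      using disjoint fin_Union \<open>N \<subseteq> F\<close> by (simp add: card_Un_disjoint)
    also have "\<Union>N \<union> \<Union>(F - N) = \<Union>F" using \<open>N \<subseteq> F\<close> by blast
    finally show ?thesis .
  qed simp
qed

section \<open>The graph G(n,3,1)\<close>

lemma finite_V: "finite (V n)"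
  unfolding V_def by (rule finite_subset[of _ "Pow {1..n}"]) auto

lemma not_adj_self: "A \<in> V n \<Longrightarrow> \<not> adj A A"
  by (simp add: V_def adj_def)

lemma finite_alpha_candidates: "finite {card W | W. W \<subseteq> V n \<and> (\<forall>A\<in>W. \<forall>B\<in>W. \<not> adj A B)}"
  by (rule finite_subset[of _ "card ` Pow (V n)"]) (auto simp: finite_V)

lemma card_le_alpha: "I \<subseteq> V n \<Longrightarrow> \<forall>A\<in>I. \<forall>B\<in>I. \<not> adj A B \<Longrightarrow> card I \<le> alpha n"
  unfolding alpha_def by (rule Max_ge[OF finite_alpha_candidates]) blast

lemma alpha_le: "alpha n \<le> n"
  unfolding alpha_def
proof (rule Max.boundedI[OF finite_alpha_candidates])
  show "{card W | W. W \<subseteq> V n \<and> (\<forall>A\<in>W. \<forall>B\<in>W. \<not> adj A B)} \<noteq> {}" by blast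
next
  fix c assume "c \<in> {card W | W. W \<subseteq> V n \<and> (\<forall>A\<in>W. \<forall>B\<in>W. \<not> adj A B)}"
  then obtain W where W: "c = card W" "W \<subseteq> V n" "\<forall>A\<in>W. \<forall>B\<in>W. \<not> adj A B" by blast
  have "finite W" using W(2) finite_V finite_subset by blast
  then have "card W \<le> card (\<Union>W)"
    using W(2,3) by (intro card_le_card_Union_if_no_Int_one) (auto simp: V_def adj_def)
  also have "\<dots> \<le> card {1..n}" using W(2) by (intro card_mono) (auto simp: V_def)
  finally show "c \<le> n" using W(1) by simp
qed

lemma redges_eq_card_edges: "redges W = card (edges adj W)"
  unfolding redges_def edges_def ..

lemma finite_rmin_candidates: "finite {redges W | W. W \<subseteq> V n \<and> card W = l}"
proof (rule finite_subset)
  show "{redges W | W. W \<subseteq> V n \<and> card W = l} \<subseteq> redges ` Pow (V n)" by blast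
qed (simp add: finite_V)

lemma rmin_le_redges: "W \<subseteq> V n \<Longrightarrow> card W = l \<Longrightarrow> rmin n l \<le> redges W"
  unfolding rmin_def by (rule Min_le[OF finite_rmin_candidates]) blast

lemma rmin_attained:
  assumes "W \<subseteq> V n" "card W = l"
  obtains W' where "W' \<subseteq> V n" "card W' = l" "redges W' = rmin n l"
proof -
  have "{redges W | W. W \<subseteq> V n \<and> card W = l} \<noteq> {}" using assms by blast
  then have "rmin n l \<in> {redges W | W. W \<subseteq> V n \<and> card W = l}"
    unfolding rmin_def by (rule Min_in[OF finite_rmin_candidates])
  then obtain W' where "W' \<subseteq> V n" "card W' = l" "redges W' = rmin n l" by auto
  then show ?thesis by (rule that)
qed

lemma rmin_lower_bound:
  assumes "W \<subseteq> V n" "card W = l"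
  shows "real l ^ 2 \<le> real (alpha n) * (2 * real (rmin n l) + real l)"
proof -
  obtain W' where W': "W' \<subseteq> V n" "card W' = l" "redges W' = rmin n l"
    using rmin_attained[OF assms] .
  let ?E = "\<lambda>A B. adj A B \<and> A \<noteq> B"
  have "finite W'" using W'(1) finite_V finite_subset by blast
  have sym: "?E A B \<Longrightarrow> ?E B A" for A B by (auto simp: adj_def Int_commute)
  obtain I where I: "I \<subseteq> W'" "\<forall>A\<in>I. \<forall>B\<in>I. \<not> ?E A B"
    and bound: "real (card W')^2 \<le> real (card I) * (2 * real (card (edges ?E W')) + real (card W'))"
    using turan_bound[of W' ?E, OF \<open>finite W'\<close> _ sym] by blast
  have "card (edges ?E W') \<le> redges W'"
    unfolding redges_eq_card_edges using finite_edges[OF \<open>finite W'\<close>]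
    by (intro card_mono) (auto simp: edges_def)
  moreover have "\<forall>A\<in>I. \<forall>B\<in>I. \<not> adj A B" using I W'(1) not_adj_self[of _ n] by blast
  then have "card I \<le> alpha n" using I(1) W'(1) by (intro card_le_alpha) auto
  ultimately have "real (card I) * (2 * real (card (edges ?E W')) + real (card W'))
      \<le> real (alpha n) * (2 * real (rmin n l) + real l)"
    using W'(2,3) by (intro mult_mono) simp_all
  then show ?thesis using bound W'(2) by simp
qed

section \<open>The grid construction\<close>

definition grid_triple :: "nat \<Rightarrow> nat \<Rightarrow> nat \<Rightarrow> nat set" where
  "grid_triple m k p = {2 * (p div k) + 1, 2 * (p div k) + 2, 2 * m + 1 + p mod k}"

lemma triple_Int:
  fixes s t i j c :: nat
  assumes "2 * s + 2 < c" "2 * t + 2 < c"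
  shows "{2 * s + 1, 2 * s + 2, c + i} \<inter> {2 * t + 1, 2 * t + 2, c + j} =
    (if s = t then {2 * s + 1, 2 * s + 2} else {}) \<union> (if i = j then {c + i} else {})"
  using assms by auto

lemma grid_triple_Int:
  assumes "p div k < m" "q div k < m"
  shows "grid_triple m k p \<inter> grid_triple m k q =
    (if p div k = q div k then {2 * (p div k) + 1, 2 * (p div k) + 2} else {}) \<union>
    (if p mod k = q mod k then {2 * m + 1 + p mod k} else {})"
  using triple_Int[of "p div k" "2 * m + 1" "q div k" "p mod k" "q mod k"] assms
  unfolding grid_triple_def by simp

lemma card_grid_triple: "p div k < m \<Longrightarrow> card (grid_triple m k p) = 3"
  unfolding grid_triple_def by (simp add: card_insert_if)

lemma grid_triple_in_V:
  assumes "p div k < m" "0 < k"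
  shows "grid_triple m k p \<in> V (2 * m + k)"
  using assms card_grid_triple[of p k m] by (auto simp: V_def grid_triple_def Suc_le_eq)

lemma adj_grid_triple_iff:
  assumes "p div k < m" "q div k < m"
  shows "adj (grid_triple m k p) (grid_triple m k q) \<longleftrightarrow> p mod k = q mod k \<and> p div k \<noteq> q div k"
  using assms unfolding adj_def grid_triple_Int[OF assms] by (simp add: card_insert_if)

lemma inj_on_grid_triple: "inj_on (grid_triple m k) {p. p div k < m}"
proof (rule inj_onI)
  fix p q assume "p \<in> {p. p div k < m}" "q \<in> {p. p div k < m}"
    and eq: "grid_triple m k p = grid_triple m k q"
  then have p: "p div k < m" and q: "q div k < m" by simp_all
  have card_Int: "card (grid_triple m k p \<inter> grid_triple m k q) = 3"
    using eq card_grid_triple[OF p] by simp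
  note Int = grid_triple_Int[OF p q]
  have "p div k = q div k"
  proof (rule ccontr)
    assume "p div k \<noteq> q div k"
    then have "card (grid_triple m k p \<inter> grid_triple m k q) \<le> 1" unfolding Int by simp
    then show False using card_Int by simp
  qed
  moreover have "p mod k = q mod k"
  proof (rule ccontr)
    assume "p mod k \<noteq> q mod k"
    then have "card (grid_triple m k p \<inter> grid_triple m k q) \<le> 2"
      unfolding Int by (simp add: card_insert_if)
    then show False using card_Int by simp
  qed
  ultimately show "p = q" by (metis div_mult_mod_eq)
qed

lemma card_same_residue_below: "card {p. p < q \<and> p mod k = q mod k} \<le> q div (k::nat)"
proof -
  let ?S = "{p. p < q \<and> p mod k = q mod k}"
  have "inj_on (\<lambda>p. p div k) ?S"
  proof (rule inj_onI)
    fix p p' assume "p \<in> ?S" "p' \<in> ?S" "p div k = p' div k"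
    then show "p = p'" using div_mult_mod_eq[of p k] div_mult_mod_eq[of p' k] by simp
  qed
  moreover have "p div k < q div k" if "p \<in> ?S" for p
  proof -
    from that have "p < q" "p mod k = q mod k" by auto
    then have "p div k \<noteq> q div k" by (metis div_mult_mod_eq less_irrefl)
    moreover have "p div k \<le> q div k" using \<open>p < q\<close> by (simp add: div_le_mono)
    ultimately show ?thesis by simp
  qed
  ultimately have "card ?S \<le> card {..<q div k}" by (intro card_inj_on_le) auto
  then show ?thesis by simp
qed

lemma sum_lessThan_div_le: "real (\<Sum>q<l. q div k) \<le> real l ^ 2 / (2 * real k)"
proof -
  have twice_sum: "2 * (\<Sum>q<l. real q) \<le> real l ^ 2" for l
    by (induction l) (simp_all add: power2_eq_square algebra_simps)
  have "real (\<Sum>q<l. q div k) \<le> (\<Sum>q<l. real q / real k)"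
    unfolding of_nat_sum by (intro sum_mono of_nat_div_le_of_nat)
  also have "\<dots> = (\<Sum>q<l. real q) / real k" by (simp add: sum_divide_distrib)
  also have "\<dots> \<le> real l ^ 2 / (2 * real k)"
    using twice_sum[of l] by (cases "k = 0") (simp_all add: field_simps)
  finally show ?thesis .
qed

lemma grid_triples_in_V:
  assumes "0 < k" "l \<le> k * m"
  shows "grid_triple m k ` {..<l} \<subseteq> V (2 * m + k)" "card (grid_triple m k ` {..<l}) = l"
proof -
  have rows: "p div k < m" if "p < l" for p
    using that assms by (intro less_mult_imp_div_less) (simp add: mult.commute)
  then show "grid_triple m k ` {..<l} \<subseteq> V (2 * m + k)" using grid_triple_in_V assms(1) by blast
  have "inj_on (grid_triple m k) {..<l}"
    using inj_on_grid_triple by (rule inj_on_subset) (use rows in auto)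
  then show "card (grid_triple m k ` {..<l}) = l" by (simp add: card_image)
qed

lemma redges_grid_triples_le:
  assumes "0 < k" "l \<le> k * m"
  shows "redges (grid_triple m k ` {..<l}) \<le> (\<Sum>q<l. q div k)"
proof -
  have rows: "p div k < m" if "p < l" for p
    using that assms by (intro less_mult_imp_div_less) (simp add: mult.commute)
  define P where "P = (SIGMA q:{..<l}. {p. p < q \<and> p mod k = q mod k})"
  have "edges adj (grid_triple m k ` {..<l}) \<subseteq> (\<lambda>(q, p). {grid_triple m k p, grid_triple m k q}) ` P"
  proof
    fix e assume "e \<in> edges adj (grid_triple m k ` {..<l})"
    then obtain p q where e: "e = {grid_triple m k p, grid_triple m k q}" "p < l" "q < l"
      and "adj (grid_triple m k p) (grid_triple m k q)"
      unfolding edges_def by blast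
    then have "p mod k = q mod k" "p \<noteq> q" using adj_grid_triple_iff rows by auto
    then consider "(q, p) \<in> P" | "(p, q) \<in> P" using e(2,3) by (cases "p < q") (auto simp: P_def)
    then show "e \<in> (\<lambda>(q, p). {grid_triple m k p, grid_triple m k q}) ` P"
      by cases (auto simp: e insert_commute)
  qed
  moreover have "finite P" unfolding P_def by auto
  ultimately have "redges (grid_triple m k ` {..<l}) \<le> card ((\<lambda>(q, p). {grid_triple m k p, grid_triple m k q}) ` P)"
    unfolding redges_eq_card_edges by (intro card_mono) simp_all
  also have "\<dots> \<le> card P" using \<open>finite P\<close> by (rule card_image_le)
  also have "card P = (\<Sum>q<l. card {p. p < q \<and> p mod k = q mod k})"
    unfolding P_def by (simp add: card_SigmaI)
  also have "\<dots> \<le> (\<Sum>q<l. q div k)" by (intro sum_mono card_same_residue_below)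
  finally show ?thesis .
qed

lemma rmin_ratio_bounds:
  assumes "n = 2 * m + k" "0 < k" "0 < l" "l \<le> k * m"
  shows "1 - real n / real l \<le> 2 * real (alpha n) * real (rmin n l) / real l ^ 2"
    and "2 * real (alpha n) * real (rmin n l) / real l ^ 2 \<le> real n / real k"
proof -
  let ?W = "grid_triple m k ` {..<l}"
  have W: "?W \<subseteq> V n" "card ?W = l" using grid_triples_in_V assms by auto
  have alpha: "real (alpha n) \<le> real n" using alpha_le by simp
  have "real l ^ 2 \<le> real (alpha n) * (2 * real (rmin n l) + real l)"
    using rmin_lower_bound[OF W] .
  then have "1 \<le> real (alpha n) * (2 * real (rmin n l) + real l) / real l ^ 2"
    using assms(3) by (simp add: le_divide_eq)
  also have "\<dots> = 2 * real (alpha n) * real (rmin n l) / real l ^ 2 + real (alpha n) / real l"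
    using assms(3) by (simp add: field_simps power2_eq_square)
  finally have "1 \<le> 2 * real (alpha n) * real (rmin n l) / real l ^ 2 + real (alpha n) / real l" .
  moreover have "real (alpha n) / real l \<le> real n / real l" using alpha by (simp add: divide_right_mono)
  ultimately show "1 - real n / real l \<le> 2 * real (alpha n) * real (rmin n l) / real l ^ 2"
    by linarith
  have "rmin n l \<le> (\<Sum>q<l. q div k)"
    using rmin_le_redges[OF W] redges_grid_triples_le[OF assms(2,4)] by (rule order_trans)
  then have "real (rmin n l) \<le> real l ^ 2 / (2 * real k)"
    using sum_lessThan_div_le[of k l] by linarith
  then have "2 * real (alpha n) * real (rmin n l) / real l ^ 2
      \<le> 2 * real (alpha n) * (real l ^ 2 / (2 * real k)) / real l ^ 2"
    by (intro divide_right_mono mult_left_mono) auto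
  also have "\<dots> = real (alpha n) / real k" using assms(2,3) by (simp add: field_simps)
  also have "\<dots> \<le> real n / real k" using alpha by (simp add: divide_right_mono)
  finally show "2 * real (alpha n) * real (rmin n l) / real l ^ 2 \<le> real n / real k" .
qed

section \<open>Asymptotics\<close>

lemma le_grid_size:
  fixes l n :: nat
  defines "m \<equiv> 2 * l div n + 1"
  assumes "4 * m < n"
  shows "l \<le> (n - 2 * m) * m"
proof -
  have "2 * l mod n < n" using assms(2) by simp
  moreover have "n * (2 * l div n) + 2 * l mod n = 2 * l" by (rule mult_div_mod_eq)
  moreover have "n * m = n * (2 * l div n) + n" unfolding m_def by simp
  ultimately have "2 * l < n * m" by linarith
  moreover have "n * m \<le> 2 * (n - 2 * m) * m"
    using assms(2) by (intro mult_right_mono) simp_all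
  ultimately show ?thesis by linarith
qed

lemma grid_rows_ratio_tendsto_zero:
  assumes "(\<lambda>n. real (l n)) \<in> o(\<lambda>n. real n ^ 2)"
  shows "((\<lambda>n. real (2 * l n div n + 1) / real n) \<longlongrightarrow> 0) at_top"
proof (rule tendsto_sandwich)
  show "eventually (\<lambda>n. 0 \<le> real (2 * l n div n + 1) / real n) at_top" by simp
  show "eventually (\<lambda>n. real (2 * l n div n + 1) / real n \<le> 2 * (real (l n) / real n ^ 2) + 1 / real n) at_top"
    using eventually_gt_at_top[of 0]
  proof eventually_elim
    case (elim n)
    have "real (2 * l n div n) \<le> real (2 * l n) / real n" by (rule of_nat_div_le_of_nat)
    then have "real (2 * l n div n + 1) / real n \<le> (2 * real (l n) / real n + 1) / real n"
      by (intro divide_right_mono) simp_all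
    also have "\<dots> = 2 * (real (l n) / real n ^ 2) + 1 / real n"
      using elim by (simp add: field_simps power2_eq_square)
    finally show ?case .
  qed
  show "((\<lambda>n. 2 * (real (l n) / real n ^ 2) + 1 / real n) \<longlongrightarrow> 0) at_top"
    using tendsto_add[OF tendsto_mult_right_zero[OF smalloD_tendsto[OF assms], of 2] lim_inverse_n']
    by simp
qed (rule tendsto_const)

lemma div_sub_twice_tendsto_one:
  assumes "((\<lambda>n. real (m n) / real n) \<longlongrightarrow> 0) at_top"
  shows "((\<lambda>n. real n / real (n - 2 * m n)) \<longlongrightarrow> 1) at_top"
proof -
  have "((\<lambda>n. 1 - 2 * (real (m n) / real n)) \<longlongrightarrow> 1 - 2 * 0) at_top"
    by (intro tendsto_intros assms)
  then have "((\<lambda>n. 1 / (1 - 2 * (real (m n) / real n))) \<longlongrightarrow> 1 / (1 - 2 * 0)) at_top"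
    by (intro tendsto_divide tendsto_const) simp_all
  then have lim: "((\<lambda>n. 1 / (1 - 2 * (real (m n) / real n))) \<longlongrightarrow> 1) at_top" by simp
  have "eventually (\<lambda>n. real (m n) / real n < 1 / 2) at_top"
    by (rule order_tendstoD(2)[OF assms]) simp
  then have "eventually (\<lambda>n. 1 / (1 - 2 * (real (m n) / real n)) = real n / real (n - 2 * m n)) at_top"
    using eventually_gt_at_top[of 0]
  proof eventually_elim
    case (elim n)
    then have n: "0 < real n" by simp
    with elim have "real (2 * m n) < real n" by (simp add: divide_less_eq)
    then have "2 * m n < n" by (simp only: of_nat_less_iff)
    then have "real (n - 2 * m n) = real n - 2 * real (m n)" by (simp add: of_nat_diff)
    moreover have "1 - 2 * (real (m n) / real n) = (real n - 2 * real (m n)) / real n"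
      using n by (simp add: field_simps)
    ultimately show ?case by simp
  qed
  with lim show ?thesis by (rule Lim_transform_eventually)
qed

lemma rmin_ratio_eventually_bounds:
  fixes l :: "nat \<Rightarrow> nat"
  defines "m \<equiv> \<lambda>n. 2 * l n div n + 1"
  assumes n_l: "(\<lambda>n. real n) \<in> o(\<lambda>n. real (l n))"
    and m_n: "((\<lambda>n. real (m n) / real n) \<longlongrightarrow> 0) at_top"
  shows "eventually (\<lambda>n. 1 - real n / real (l n) \<le> 2 * real (alpha n) * real (rmin n (l n)) / real (l n) ^ 2
    \<and> 2 * real (alpha n) * real (rmin n (l n)) / real (l n) ^ 2 \<le> real n / real (n - 2 * m n)) at_top"
proof -
  have "eventually (\<lambda>n. real (m n) / real n < 1 / 4) at_top"
    by (rule order_tendstoD(2)[OF m_n]) simp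
  then have "eventually (\<lambda>n. real (m n) / real n < 1 / 4 \<and> n \<le> l n \<and> 0 < n) at_top"
    using landau_o.smallD[OF n_l zero_less_one] eventually_gt_at_top[of 0] by eventually_elim simp
  then show ?thesis
  proof eventually_elim
    case (elim n)
    then have "0 < real n" "real (m n) / real n < 1 / 4" by simp_all
    then have "real (4 * m n) < real n" by (simp add: divide_less_eq)
    then have "4 * m n < n" by (simp only: of_nat_less_iff)
    then show ?case
      using rmin_ratio_bounds[of n "m n" "n - 2 * m n" "l n"] le_grid_size[of "l n" n] elim
      unfolding m_def by simp
  qed
qed

theorem theorem1:
  fixes f g l :: "nat \<Rightarrow> nat"
  assumes "(\<lambda>n. real n) \<in> o(\<lambda>n. real (f n))"
    and "(\<lambda>n. real (g n)) \<in> o(\<lambda>n. (real n)^2)"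
    and "\<And>n. f n \<le> l n \<and> l n \<le> g n"
  shows "(\<lambda>n. real (rmin n (l n))) \<sim>[at_top] (\<lambda>n. real (l n)^2 / (2 * real (alpha n)))"
proof -
  define m where "m n = 2 * l n div n + 1" for n
  define \<rho> where "\<rho> n = 2 * real (alpha n) * real (rmin n (l n)) / real (l n) ^ 2" for n
  have "(\<lambda>n. real (f n)) \<in> O(\<lambda>n. real (l n))" "(\<lambda>n. real (l n)) \<in> O(\<lambda>n. real (g n))"
    using assms(3) by (auto intro!: bigoI[where c = 1] always_eventually)
  then have n_l: "(\<lambda>n. real n) \<in> o(\<lambda>n. real (l n))" and l_n2: "(\<lambda>n. real (l n)) \<in> o(\<lambda>n. real n ^ 2)"
    using landau_o.small_big_trans[OF assms(1)] landau_o.big_small_trans[OF _ assms(2)] by auto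
  have m_n: "((\<lambda>n. real (m n) / real n) \<longlongrightarrow> 0) at_top"
    unfolding m_def using grid_rows_ratio_tendsto_zero[OF l_n2] .
  have "eventually (\<lambda>n. 1 - real n / real (l n) \<le> \<rho> n \<and> \<rho> n \<le> real n / real (n - 2 * m n)) at_top"
    using rmin_ratio_eventually_bounds[OF n_l] m_n unfolding \<rho>_def m_def by simp
  then have "(\<rho> \<longlongrightarrow> 1) at_top"
    using tendsto_sandwich[of "\<lambda>n. 1 - real n / real (l n)" \<rho> at_top "\<lambda>n. real n / real (n - 2 * m n)"]
      tendsto_diff[OF tendsto_const smalloD_tendsto[OF n_l], of 1] div_sub_twice_tendsto_one[OF m_n]
    by (simp add: eventually_conj_iff)
  then show ?thesis
    unfolding \<rho>_def by (intro asymp_equivI') (simp add: divide_divide_eq_right mult_ac)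
qed

end
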